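(* Let $G$ be a finite simple graph. If $G$ has two distinct min-max clique coverings that both satisfy simple intersection, then $G$ contains $\mathrm{circ}(6,\{1,2\})$ as an induced subgraph.
   Context: A clique covering of $G$ is a set of cliques (vertex sets inducing complete subgraphs) such that every edge of $G$ lies in at least one of them. $\operatorname{cc}(G)$ denotes the minimum size of a clique covering. A min-max clique covering is a clique covering of size $\operatorname{cc}(G)$ in which every clique is a maximal clique of $G$. A clique covering $\{C_1,\dots,C_\ell\}$ has simple intersection if $C_i\cap C_j\cap C_k=\emptyset$ for all distinct $i,j,k$. The circulant graph $\mathrm{circ}(6,\{1,2\})$ has vertex set $\{0,\dots,5\}$ with $i$ adjacent to $i\pm1$ and $i\pm2 \pmod 6$; equivalently its vertices are the $2$-subsets of $\{1,2,3,4\}$, two being adjacent iff they intersect. *)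

theory Defs
  imports Main
begin

definition simple_graph :: "'a set \<Rightarrow> ('a \<Rightarrow> 'a \<Rightarrow> bool) \<Rightarrow> bool" where
  "simple_graph V E \<longleftrightarrow> finite V \<and> (\<forall>x y. E x y \<longrightarrow> x \<in> V \<and> y \<in> V)
     \<and> (\<forall>x y. E x y \<longrightarrow> E y x) \<and> (\<forall>x. \<not> E x x)"

definition is_clique :: "'a set \<Rightarrow> ('a \<Rightarrow> 'a \<Rightarrow> bool) \<Rightarrow> 'a set \<Rightarrow> bool" where
  "is_clique V E C \<longleftrightarrow> C \<subseteq> V \<and> (\<forall>x\<in>C. \<forall>y\<in>C. x \<noteq> y \<longrightarrow> E x y)"

definition maximal_clique :: "'a set \<Rightarrow> ('a \<Rightarrow> 'a \<Rightarrow> bool) \<Rightarrow> 'a set \<Rightarrow> bool" where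
  "maximal_clique V E C \<longleftrightarrow> is_clique V E C \<and> (\<forall>D. is_clique V E D \<and> C \<subseteq> D \<longrightarrow> D = C)"

definition clique_covering :: "'a set \<Rightarrow> ('a \<Rightarrow> 'a \<Rightarrow> bool) \<Rightarrow> 'a set set \<Rightarrow> bool" where
  "clique_covering V E \<C> \<longleftrightarrow> finite \<C> \<and> (\<forall>C\<in>\<C>. is_clique V E C)
     \<and> (\<forall>x\<in>V. \<forall>y\<in>V. E x y \<longrightarrow> (\<exists>C\<in>\<C>. x \<in> C \<and> y \<in> C))"

definition cc :: "'a set \<Rightarrow> ('a \<Rightarrow> 'a \<Rightarrow> bool) \<Rightarrow> nat" where
  "cc V E = (LEAST k. \<exists>\<C>. clique_covering V E \<C> \<and> card \<C> = k)"

definition min_max_clique_covering :: "'a set \<Rightarrow> ('a \<Rightarrow> 'a \<Rightarrow> bool) \<Rightarrow> 'a set set \<Rightarrow> bool" where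
  "min_max_clique_covering V E \<C> \<longleftrightarrow> clique_covering V E \<C> \<and> card \<C> = cc V E
     \<and> (\<forall>C\<in>\<C>. maximal_clique V E C)"

definition simple_intersection :: "'a set set \<Rightarrow> bool" where
  "simple_intersection \<C> \<longleftrightarrow> (\<forall>C1\<in>\<C>. \<forall>C2\<in>\<C>. \<forall>C3\<in>\<C>.
     C1 \<noteq> C2 \<and> C1 \<noteq> C3 \<and> C2 \<noteq> C3 \<longrightarrow> C1 \<inter> C2 \<inter> C3 = {})"

text \<open>Adjacency of circ(6,{1,2}) on vertices 0..5: i ~ j iff j - i = +-1 or +-2 mod 6.\<close>
definition circ6_adj :: "nat \<Rightarrow> nat \<Rightarrow> bool" where
  "circ6_adj i j \<longleftrightarrow> (int j - int i) mod 6 \<in> {1, 2, 4, 5}"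

definition has_induced_circ6 :: "'a set \<Rightarrow> ('a \<Rightarrow> 'a \<Rightarrow> bool) \<Rightarrow> bool" where
  "has_induced_circ6 V E \<longleftrightarrow> (\<exists>f :: nat \<Rightarrow> 'a. inj_on f {0..<6} \<and> f ` {0..<6} \<subseteq> V
     \<and> (\<forall>i<6. \<forall>j<6. E (f i) (f j) \<longleftrightarrow> circ6_adj i j))"

end

theory Submission
  imports Defs
begin

text \<open>
  Let \<open>C\<close> be a clique of the first covering that is not in the second. As a maximal clique,
  \<open>C\<close> lies inside no clique \<open>P\<close> of the second covering. Simple intersection forces the cliques
  of the second covering through a vertex of \<open>C\<close> to come in pairs whose union contains \<open>C\<close>;
  following the edges of \<open>C\<close> one finds three such cliques \<open>P, Q, R\<close> with every vertex of \<open>C\<close>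
  in two of them, and vertices \<open>x, y, z \<in> C\<close> lying in \<open>P \<inter> Q\<close>, \<open>Q \<inter> R\<close>, \<open>R \<inter> P\<close> only.
  Each of \<open>P, Q, R\<close> has a vertex outside \<open>C\<close>, whose neighbours in \<open>C\<close> are exactly those in
  its own clique. Simple intersection of the first covering at \<open>x, y, z\<close> makes these three
  outside vertices pairwise adjacent, and the six vertices induce \<open>circ(6,{1,2})\<close>.
\<close>

lemma is_cliqueD: "is_clique V E C \<Longrightarrow> a \<in> C \<Longrightarrow> b \<in> C \<Longrightarrow> a \<noteq> b \<Longrightarrow> E a b"
  unfolding is_clique_def by blast

lemma clique_coveringD:
  "simple_graph V E \<Longrightarrow> clique_covering V E \<C> \<Longrightarrow> E a b \<Longrightarrow> \<exists>K\<in>\<C>. a \<in> K \<and> b \<in> K"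
  unfolding simple_graph_def clique_covering_def by blast

lemma simple_intersectionD:
  "simple_intersection \<C> \<Longrightarrow> A \<in> \<C> \<Longrightarrow> B \<in> \<C> \<Longrightarrow> S \<in> \<C> \<Longrightarrow> A \<noteq> B
    \<Longrightarrow> v \<in> A \<Longrightarrow> v \<in> B \<Longrightarrow> v \<in> S \<Longrightarrow> S = A \<or> S = B"
  unfolding simple_intersection_def by blast

lemma cc_le_card: "clique_covering V E \<C> \<Longrightarrow> cc V E \<le> card \<C>"
  unfolding cc_def by (rule Least_le) blast

lemma min_max_clique_covering_member_nontrivial:
  assumes sg: "simple_graph V E" and mm: "min_max_clique_covering V E \<C>" and C: "C \<in> \<C>"
  obtains x u where "x \<in> C" "u \<in> C" "x \<noteq> u"
proof -
  have cov: "clique_covering V E \<C>" and card: "card \<C> = cc V E"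
    using mm unfolding min_max_clique_covering_def by blast+
  have "clique_covering V E (\<C> - {C})" if trivial: "\<forall>x\<in>C. \<forall>u\<in>C. x = u"
    unfolding clique_covering_def
  proof (intro conjI ballI impI)
    show "finite (\<C> - {C})" "\<And>K. K \<in> \<C> - {C} \<Longrightarrow> is_clique V E K"
      using cov unfolding clique_covering_def by blast+
    fix a b assume "E a b"
    then obtain K where K: "K \<in> \<C>" "a \<in> K" "b \<in> K" using clique_coveringD[OF sg cov] by blast
    have "a \<noteq> b" using \<open>E a b\<close> sg unfolding simple_graph_def by blast
    then show "\<exists>K\<in>\<C> - {C}. a \<in> K \<and> b \<in> K" using K trivial by blast
  qed
  moreover have "card (\<C> - {C}) < card \<C>"
    using cov C unfolding clique_covering_def by (blast intro: card_Diff1_less)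
  ultimately show ?thesis using that cc_le_card card by fastforce
qed

lemma distinct_min_max_clique_coverings_obtain:
  assumes "min_max_clique_covering V E \<C>1" "min_max_clique_covering V E \<C>2" "\<C>1 \<noteq> \<C>2"
  obtains C where "C \<in> \<C>1" "\<forall>D\<in>\<C>2. \<not> C \<subseteq> D"
proof -
  have "finite \<C>2" "card \<C>1 = card \<C>2"
    using assms unfolding min_max_clique_covering_def clique_covering_def by simp_all
  then obtain C where C: "C \<in> \<C>1" "C \<notin> \<C>2" using card_subset_eq \<open>\<C>1 \<noteq> \<C>2\<close> by blast
  have "maximal_clique V E C" "\<forall>D\<in>\<C>2. maximal_clique V E D"
    using assms C unfolding min_max_clique_covering_def by blast+
  then have "\<forall>D\<in>\<C>2. \<not> C \<subseteq> D" using C(2) unfolding maximal_clique_def by blast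
  with C(1) show ?thesis using that by blast
qed

lemma clique_subset_Un_if_covering_cliques_share_vertex:
  assumes sg: "simple_graph V E" and cov: "clique_covering V E \<C>" and si: "simple_intersection \<C>"
    and C: "is_clique V E C" "x \<in> C"
    and PQ: "P \<in> \<C>" "Q \<in> \<C>" "P \<noteq> Q" "x \<in> P" "x \<in> Q"
  shows "C \<subseteq> P \<union> Q"
proof
  fix c assume c: "c \<in> C"
  show "c \<in> P \<union> Q"
  proof (cases "c = x")
    case False
    then obtain S where "S \<in> \<C>" "x \<in> S" "c \<in> S"
      using clique_coveringD[OF sg cov is_cliqueD[OF C c]] by blast
    then show ?thesis using simple_intersectionD[OF si PQ(1,2) _ PQ(3-5)] by blast
  qed (use PQ in blast)
qed

lemma covering_triangle_around_clique:
  assumes sg: "simple_graph V E" and cov: "clique_covering V E \<C>" and si: "simple_intersection \<C>"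
    and C: "is_clique V E C" and not_inside: "\<forall>D\<in>\<C>. \<not> C \<subseteq> D"
    and xu: "x \<in> C" "u \<in> C" "x \<noteq> u"
  obtains P Q R y z where "P \<in> \<C>" "Q \<in> \<C>" "R \<in> \<C>" "P \<noteq> Q" "Q \<noteq> R" "R \<noteq> P"
    "y \<in> C" "z \<in> C" "x \<in> P \<inter> Q - R" "y \<in> Q \<inter> R - P" "z \<in> R \<inter> P - Q"
    "C \<subseteq> P \<union> Q" "C \<subseteq> Q \<union> R" "C \<subseteq> R \<union> P"
proof -
  note covering_clique = clique_coveringD[OF sg cov is_cliqueD[OF C]]
  note subset_Un = clique_subset_Un_if_covering_cliques_share_vertex[OF sg cov si C]
  obtain P where P: "P \<in> \<C>" "x \<in> P" using covering_clique[OF xu] by blast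
  obtain y where y: "y \<in> C" "y \<notin> P" using not_inside P by blast
  obtain Q where Q: "Q \<in> \<C>" "x \<in> Q" "y \<in> Q" using covering_clique[OF xu(1) y(1)] P y by blast
  have PQ: "C \<subseteq> P \<union> Q" using subset_Un[OF xu(1) P(1) Q(1)] P Q y by blast
  obtain z where z: "z \<in> C" "z \<notin> Q" using not_inside Q by blast
  obtain R where R: "R \<in> \<C>" "y \<in> R" "z \<in> R" using covering_clique[OF y(1) z(1)] PQ Q y z by blast
  have QR: "C \<subseteq> Q \<union> R" using subset_Un[OF y(1) Q(1) R(1)] Q R z by blast
  have RP: "C \<subseteq> R \<union> P" using subset_Un[OF z(1) R(1) P(1)] PQ R y z by blast
  have "x \<notin> R"
    using simple_intersectionD[OF si P(1) Q(1) R(1)] P Q R y z by blast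
  with that P Q R y z PQ QR RP show ?thesis by blast
qed

lemma maximal_clique_Int_subset:
  assumes maxC: "maximal_clique V E C" and D: "is_clique V E D" and A: "is_clique V E A"
    and "C \<subseteq> D \<union> A"
  shows "D \<inter> A \<subseteq> C"
proof
  fix d assume d: "d \<in> D \<inter> A"
  have "is_clique V E (insert d C)"
    using maxC D A d \<open>C \<subseteq> D \<union> A\<close> unfolding maximal_clique_def is_clique_def by blast
  then show "d \<in> C" using maxC unfolding maximal_clique_def by blast
qed

lemma covering_clique_has_private_vertex:
  assumes sg: "simple_graph V E" and cov: "clique_covering V E \<C>" and si: "simple_intersection \<C>"
    and maxC: "maximal_clique V E C" and maxD: "maximal_clique V E D" and "D \<noteq> C"
    and mem: "D \<in> \<C>" "A \<in> \<C>" "B \<in> \<C>" "A \<noteq> B"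
    and CA: "C \<subseteq> D \<union> A" and CB: "C \<subseteq> D \<union> B"
  obtains d where "d \<in> V" "d \<notin> C" "\<forall>c\<in>C. E d c \<longleftrightarrow> c \<in> D"
proof -
  have clique: "\<And>K. K \<in> \<C> \<Longrightarrow> is_clique V E K" and Cclique: "is_clique V E C"
    using cov maxC unfolding clique_covering_def maximal_clique_def by blast+
  obtain d where d: "d \<in> D" "d \<notin> C"
    using maxD Cclique \<open>D \<noteq> C\<close> unfolding maximal_clique_def by blast
  have "\<not> E d c" if c: "c \<in> C" "c \<notin> D" for c
  proof
    assume "E d c"
    then obtain S where S: "S \<in> \<C>" "d \<in> S" "c \<in> S" using clique_coveringD[OF sg cov] by blast
    have "S = A \<or> S = B"
      using simple_intersectionD[OF si mem(2,3) S(1) mem(4)] S c CA CB by blast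
    then have "D \<inter> S \<subseteq> C"
      using maximal_clique_Int_subset[OF maxC clique[OF mem(1)] clique[OF S(1)]] CA CB by blast
    then show False using d S by blast
  qed
  moreover have "E d c" if "c \<in> C" "c \<in> D" for c
    using is_cliqueD[OF clique[OF mem(1)] d(1)] that d by blast
  moreover have "d \<in> V" using clique[OF mem(1)] d unfolding is_clique_def by blast
  ultimately show ?thesis using that d by blast
qed

text \<open>Both edges \<open>qp\<close>, \<open>q'p\<close> lie in cliques through \<open>p\<close> other than \<open>C\<close>, and simple intersection
  leaves room for only one of those.\<close>

lemma adjacent_if_common_neighbour_in_covering_clique:
  assumes sg: "simple_graph V E" and cov: "clique_covering V E \<C>" and si: "simple_intersection \<C>"
    and C: "C \<in> \<C>" "p \<in> C" and q: "q \<notin> C" "q' \<notin> C" "E q p" "E q' p" "q \<noteq> q'"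
  shows "E q q'"
proof -
  obtain K where K: "K \<in> \<C>" "q \<in> K" "p \<in> K" using clique_coveringD[OF sg cov q(3)] by blast
  obtain K' where K': "K' \<in> \<C>" "q' \<in> K'" "p \<in> K'" using clique_coveringD[OF sg cov q(4)] by blast
  have "K' = K" using simple_intersectionD[OF si K(1) C(1) K'(1)] K K' C q by blast
  then show ?thesis using is_cliqueD[of V E K q q'] cov K K' q unfolding clique_covering_def by blast
qed

lemma has_induced_circ6I:
  assumes sg: "simple_graph V E" and V: "{x, y, z, a, b, c} \<subseteq> V"
    and tri: "E x y" "E y z" "E x z" "E a b" "E b c" "E a c"
    and a: "E a y" "E a z" "\<not> E a x" and b: "E b x" "E b z" "\<not> E b y"
    and c: "E c x" "E c y" "\<not> E c z"
    and ne: "x \<noteq> a" "y \<noteq> b" "z \<noteq> c"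
  shows "has_induced_circ6 V E"
proof -
  have sym: "\<And>u v. E u v \<Longrightarrow> E v u" and irr: "\<And>u. \<not> E u u"
    using sg unfolding simple_graph_def by blast+
  have non_adj: "\<not> E x a" "\<not> E y b" "\<not> E z c"
    using a b c sym by blast+
  have six: "\<And>P. (\<forall>i<6. P i) \<longleftrightarrow> P 0 \<and> P 1 \<and> P 2 \<and> P 3 \<and> P (4::nat) \<and> P 5"
    by (simp add: numeral_eq_Suc All_less_Suc conj_ac)
  let ?f = "(!) [x, y, z, a, b, c]"
  have adj: "\<forall>i<6. \<forall>j<6. E (?f i) (?f j) \<longleftrightarrow> circ6_adj i j"
    unfolding six by (simp add: circ6_adj_def tri a b c sym irr non_adj)
  have "distinct [x, y, z, a, b, c]"
    using tri a b c ne irr sym by auto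
  then have "inj_on ?f {0..<6}"
    by (simp add: inj_on_nth)
  moreover have "?f ` {0..<6} \<subseteq> V"
    using V by (simp add: atLeast0LessThan image_subset_iff Ball_def six)
  ultimately show ?thesis
    unfolding has_induced_circ6_def using adj by blast
qed

theorem mainTheorem1:
  fixes V :: "'a set" and E :: "'a \<Rightarrow> 'a \<Rightarrow> bool" and \<C>1 \<C>2 :: "'a set set"
  assumes "simple_graph V E"
    and "min_max_clique_covering V E \<C>1" and "simple_intersection \<C>1"
    and "min_max_clique_covering V E \<C>2" and "simple_intersection \<C>2"
    and "\<C>1 \<noteq> \<C>2"
  shows "has_induced_circ6 V E"
proof -
  note sg = assms(1) and mm1 = assms(2) and si1 = assms(3) and mm2 = assms(4) and si2 = assms(5)
  have cov1: "clique_covering V E \<C>1" and cov2: "clique_covering V E \<C>2"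
    and max1: "\<forall>C\<in>\<C>1. maximal_clique V E C" and max2: "\<forall>D\<in>\<C>2. maximal_clique V E D"
    using mm1 mm2 unfolding min_max_clique_covering_def by blast+
  obtain C where C: "C \<in> \<C>1" "\<forall>D\<in>\<C>2. \<not> C \<subseteq> D"
    using distinct_min_max_clique_coverings_obtain[OF mm1 mm2 assms(6)] .
  have maxC: "maximal_clique V E C" and Cclique: "is_clique V E C"
    using max1 C unfolding maximal_clique_def by blast+
  obtain x u where "x \<in> C" "u \<in> C" "x \<noteq> u"
    using min_max_clique_covering_member_nontrivial[OF sg mm1 C(1)] .
  then obtain P Q R y z where PQR: "P \<in> \<C>2" "Q \<in> \<C>2" "R \<in> \<C>2" "P \<noteq> Q" "Q \<noteq> R" "R \<noteq> P"
    and xyz: "x \<in> C" "y \<in> C" "z \<in> C" "x \<in> P \<inter> Q - R" "y \<in> Q \<inter> R - P" "z \<in> R \<inter> P - Q"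
    and C_Un: "C \<subseteq> P \<union> Q" "C \<subseteq> Q \<union> R" "C \<subseteq> R \<union> P"
    using covering_triangle_around_clique[OF sg cov2 si2 Cclique C(2)] by metis
  have "P \<noteq> C" "Q \<noteq> C" "R \<noteq> C" using PQR C(2) by blast+
  note private_vertex = covering_clique_has_private_vertex[OF sg cov2 si2 maxC]
  obtain p where p: "p \<in> V" "p \<notin> C" "\<forall>c\<in>C. E p c \<longleftrightarrow> c \<in> P"
    using private_vertex[of P Q R] max2 PQR C_Un \<open>P \<noteq> C\<close> by (metis Un_commute)
  obtain q where q: "q \<in> V" "q \<notin> C" "\<forall>c\<in>C. E q c \<longleftrightarrow> c \<in> Q"
    using private_vertex[of Q R P] max2 PQR C_Un \<open>Q \<noteq> C\<close> by (metis Un_commute)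
  obtain r where r: "r \<in> V" "r \<notin> C" "\<forall>c\<in>C. E r c \<longleftrightarrow> c \<in> R"
    using private_vertex[of R P Q] max2 PQR C_Un \<open>R \<noteq> C\<close> by (metis Un_commute)
  note common_neighbour = adjacent_if_common_neighbour_in_covering_clique[OF sg cov1 si1 C(1)]
  have "E r p" using common_neighbour[of z r p] xyz p r by blast
  moreover have "E p q" using common_neighbour[of x p q] xyz p q by blast
  moreover have "E r q" using common_neighbour[of y r q] xyz q r by blast
  moreover have "{x, y, z, r, p, q} \<subseteq> V" using Cclique xyz p q r unfolding is_clique_def by blast
  ultimately show ?thesis
    using has_induced_circ6I[of V E x y z r p q] sg xyz p q r is_cliqueD[OF Cclique] by blast
qed

end
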